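(* Let $k=\overline{\mathbb Q}$ with the trivial valuation, $G=\operatorname{Spec}k[T]$ the additive group, $G^{\mathrm{an}}=\operatorname{Hom}_k(k[T],\mathbb T)$ with Berkovich's hyperoperation $\odot$, and $H=\{h\in G^{\mathrm{an}}: h(T)<0\}$. Then $H$ is closed under $\odot$, $(H,\odot)$ is a hypergroup, and the map $H\to\mathbb T_{<0}$, $h\mapsto h(T)$, is an isomorphism of hypergroups onto $\mathbb T_{<0}=\{a\in\mathbb T: a<0\}$ with the hyperaddition of $\mathbb T$ (i.e. a bijection $\phi$ with $\phi(f\odot g)=\phi(f)\oplus\phi(g)$).
   Context: $\mathbb T=\mathbb R\cup\{-\infty\}$ is the tropical hyperfield: multiplication is usual addition with $-\infty$ absorbing, hyperaddition $s\oplus t=\max\{s,t\}$ if $s\ne t$, $s\oplus s=\{u\in\mathbb T:u\le s\}$; $\mathbb T_{<0}$ (which contains $-\infty$) is closed under $\oplus$. $\operatorname{Hom}_k(B,\mathbb T)$ is the set of maps $\varphi:B\to\mathbb T$ with $\varphi(0)=-\infty$, $\varphi(1)=0$, $\varphi(xy)=\varphi(x)+\varphi(y)$, $\varphi(x+y)\in\varphi(x)\oplus\varphi(y)$, restricting to the trivial valuation on $k$ (nonzero elements $\mapsto0$). The Hopf algebra $A=k[T]$ has coproduct $\Delta(T)=T\otimes1+1\otimes T$; with $j_1(a)=a\otimes1$, $j_2(a)=1\otimes a$, $g\odot h=\{f\in\operatorname{Hom}_k(A,\mathbb T):\exists\beta\in\operatorname{Hom}_k(A\otimes_kA,\mathbb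 T),\ \beta\circ j_1=g,\ \beta\circ j_2=h,\ f=\beta\circ\Delta\}$. A hypergroup is a set with an associative hyperoperation $*$ having a unique identity $e$ ($e*x=x*e=\{x\}$), unique inverses ($e\in x*x^{-1}\cap x^{-1}*x$), and reversibility ($x\in y*z\Rightarrow y\in x*z^{-1},\ z\in y^{-1}*x$). *)

theory Defs
  imports "HOL-Analysis.Analysis" "HOL-Computational_Algebra.Polynomial"
begin

definition trop :: "ereal set" where
  "trop = {x. x \<noteq> \<infinity>}"

definition trop_neg :: "ereal set" where
  "trop_neg = {x. x < 0}"

definition trop_add :: "ereal \<Rightarrow> ereal \<Rightarrow> ereal set" where
  "trop_add s t = (if s \<noteq> t then {max s t} else {u \<in> trop. u \<le> s})"

definition kbar :: "complex set" where
  "kbar = {x. algebraic x}"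

definition polyA :: "complex poly set" where
  "polyA = {p. \<forall>i. coeff p i \<in> kbar}"

text \<open>k[T] \<otimes>_k k[T] = k[T1,T2], modelled as k[T1][T2]\<close>
definition polyAA :: "complex poly poly set" where
  "polyAA = {P. \<forall>i j. coeff (coeff P i) j \<in> kbar}"

definition j1 :: "complex poly \<Rightarrow> complex poly poly" where
  "j1 a = [:a:]"

definition j2 :: "complex poly \<Rightarrow> complex poly poly" where
  "j2 a = map_poly (\<lambda>c. [:c:]) a"

text \<open>coproduct: Delta(T) = T \<otimes> 1 + 1 \<otimes> T, i.e. p(T) \<mapsto> p(T1 + T2)\<close>
definition Delta :: "complex poly \<Rightarrow> complex poly poly" where
  "Delta p = pcompose (map_poly (\<lambda>c. [:c:]) p) [: [:0, 1:], 1 :]"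

section \<open>Hom_k(B, T) for a k-algebra given by a carrier B and the structure map k \<rightarrow> B\<close>

definition trop_hom :: "'b::comm_ring_1 set \<Rightarrow> (complex \<Rightarrow> 'b) \<Rightarrow> ('b \<Rightarrow> ereal) set" where
  "trop_hom B emb = {\<phi>. \<phi> \<in> B \<rightarrow>\<^sub>E trop \<and>
      \<phi> 0 = -\<infinity> \<and> \<phi> 1 = 0 \<and>
      (\<forall>x\<in>B. \<forall>y\<in>B. \<phi> (x * y) = \<phi> x + \<phi> y) \<and>
      (\<forall>x\<in>B. \<forall>y\<in>B. \<phi> (x + y) \<in> trop_add (\<phi> x) (\<phi> y)) \<and>
      (\<forall>c\<in>kbar. c \<noteq> 0 \<longrightarrow> \<phi> (emb c) = 0)}"

definition Gan :: "(complex poly \<Rightarrow> ereal) set" where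
  "Gan = trop_hom polyA (\<lambda>c. [:c:])"

definition Gan2 :: "(complex poly poly \<Rightarrow> ereal) set" where
  "Gan2 = trop_hom polyAA (\<lambda>c. [:[:c:]:])"

definition berk_op :: "(complex poly \<Rightarrow> ereal) \<Rightarrow> (complex poly \<Rightarrow> ereal) \<Rightarrow> (complex poly \<Rightarrow> ereal) set" where
  "berk_op g h = {f \<in> Gan. \<exists>\<beta>\<in>Gan2.
      (\<forall>a\<in>polyA. \<beta> (j1 a) = g a \<and> \<beta> (j2 a) = h a \<and> f a = \<beta> (Delta a))}"

definition Hset :: "(complex poly \<Rightarrow> ereal) set" where
  "Hset = {h \<in> Gan. h [:0, 1:] < 0}"

definition hyp_identity :: "'a set \<Rightarrow> ('a \<Rightarrow> 'a \<Rightarrow> 'a set) \<Rightarrow> 'a \<Rightarrow> bool" where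
  "hyp_identity S op e \<longleftrightarrow> e \<in> S \<and> (\<forall>x\<in>S. op e x = {x} \<and> op x e = {x})"

definition hypergroup :: "'a set \<Rightarrow> ('a \<Rightarrow> 'a \<Rightarrow> 'a set) \<Rightarrow> bool" where
  "hypergroup S op \<longleftrightarrow>
     (\<forall>x\<in>S. \<forall>y\<in>S. op x y \<subseteq> S) \<and>
     (\<forall>x\<in>S. \<forall>y\<in>S. \<forall>z\<in>S. (\<Union>w\<in>op x y. op w z) = (\<Union>w\<in>op y z. op x w)) \<and>
     (\<exists>!e. hyp_identity S op e) \<and>
     (\<forall>e. hyp_identity S op e \<longrightarrow>
        (\<forall>x\<in>S. \<exists>!x'. x' \<in> S \<and> e \<in> op x x' \<and> e \<in> op x' x) \<and>
        (\<forall>x\<in>S. \<forall>y\<in>S. \<forall>z\<in>S. \<forall>y'\<in>S. \<forall>z'\<in>S.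
            e \<in> op y y' \<and> e \<in> op y' y \<and> e \<in> op z z' \<and> e \<in> op z' z \<longrightarrow>
            x \<in> op y z \<longrightarrow> y \<in> op x z' \<and> z \<in> op y' x))"

definition hypergroup_iso :: "'a set \<Rightarrow> ('a \<Rightarrow> 'a \<Rightarrow> 'a set) \<Rightarrow> 'b set \<Rightarrow> ('b \<Rightarrow> 'b \<Rightarrow> 'b set) \<Rightarrow> ('a \<Rightarrow> 'b) \<Rightarrow> bool" where
  "hypergroup_iso S op S' op' \<phi> \<longleftrightarrow>
     bij_betw \<phi> S S' \<and> (\<forall>f\<in>S. \<forall>g\<in>S. \<phi> ` (op f g) = op' (\<phi> f) (\<phi> g))"

end

theory Submission
  imports Defs "Jordan_Normal_Form.Char_Poly"
begin

text \<open>A point \<open>\<phi>\<close> of \<open>G\<^sup>a\<^sup>n\<close> with \<open>\<phi>(T) < 0\<close> is forced to be the Gauss valuation of weight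
  \<open>\<phi>(T)\<close>, since every polynomial with nonzero constant term gets value \<open>0\<close>; so \<open>h \<mapsto> h(T)\<close>
  is a bijection \<open>H \<rightarrow> \<bbbT>\<^sub><\<^sub>0\<close>. If \<open>f \<in> g \<odot> h\<close> via \<open>\<beta>\<close>, then
  \<open>f(T) = \<beta>(T\<^sub>1 + T\<^sub>2) \<in> g(T) \<oplus> h(T)\<close>; conversely each \<open>t \<in> r \<oplus> s\<close> is \<open>\<beta>(T\<^sub>1 + T\<^sub>2)\<close>
  for a two-variable Gauss valuation \<open>\<beta>\<close>, composed with \<open>T\<^sub>2 \<mapsto> T\<^sub>2 - T\<^sub>1\<close> when \<open>r = s\<close>.
  Hence the bijection carries \<open>\<odot>\<close> onto \<open>\<oplus>\<close>, and the hypergroup axioms, checked directly for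
  \<open>(\<bbbT>\<^sub><\<^sub>0, \<oplus>)\<close>, pull back to \<open>(H, \<odot>)\<close>. That Gauss valuations restrict to
  \<open>k[T]\<close> needs the algebraic numbers to form a ring: \<open>x + y\<close> and \<open>x y\<close> act on the
  finite-dimensional \<open>\<rat>\<close>-span of the monomials \<open>x\<^sup>i y\<^sup>j\<close>, so they are eigenvalues of
  rational matrices.\<close>

section \<open>Algebraic numbers form a ring\<close>

definition rat_span :: "complex set \<Rightarrow> complex set" where
  "rat_span S = {u. \<exists>c. u = (\<Sum>s\<in>S. of_rat (c s) * s)}"

lemma rat_span_base:
  assumes "finite S" "s \<in> S"
  shows "s \<in> rat_span S"
proof -
  have "(\<Sum>t\<in>S. of_rat (if t = s then 1 else 0) * t) = (\<Sum>t\<in>S. if t = s then t else 0)"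
    by (rule sum.cong) auto
  also have "\<dots> = s"
    using assms by simp
  finally show ?thesis
    unfolding rat_span_def by (auto intro!: exI[of _ "\<lambda>t. if t = s then 1 else 0"])
qed

lemma rat_span_0: "0 \<in> rat_span S"
  unfolding rat_span_def by (auto intro!: exI[of _ "\<lambda>_. 0"])

lemma rat_span_add:
  assumes "u \<in> rat_span S" "w \<in> rat_span S"
  shows "u + w \<in> rat_span S"
proof -
  obtain c d where "u = (\<Sum>s\<in>S. of_rat (c s) * s)" "w = (\<Sum>s\<in>S. of_rat (d s) * s)"
    using assms unfolding rat_span_def by auto
  then have "u + w = (\<Sum>s\<in>S. of_rat (c s + d s) * s)"
    by (simp add: sum.distrib of_rat_add distrib_right)
  then show ?thesis
    unfolding rat_span_def by (intro CollectI exI[of _ "\<lambda>s. c s + d s"])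
qed

lemma rat_span_scale:
  assumes "u \<in> rat_span S"
  shows "of_rat q * u \<in> rat_span S"
proof -
  obtain c where "u = (\<Sum>s\<in>S. of_rat (c s) * s)"
    using assms unfolding rat_span_def by auto
  then have "of_rat q * u = (\<Sum>s\<in>S. of_rat (q * c s) * s)"
    by (simp add: sum_distrib_left of_rat_mult mult.assoc)
  then show ?thesis
    unfolding rat_span_def by (intro CollectI exI[of _ "\<lambda>s. q * c s"])
qed

lemma rat_span_sum:
  "finite I \<Longrightarrow> (\<And>i. i \<in> I \<Longrightarrow> f i \<in> rat_span S) \<Longrightarrow> sum f I \<in> rat_span S"
  by (induction I rule: finite_induct) (auto intro: rat_span_0 rat_span_add)

lemma rat_span_mult_closed:
  assumes "finite S" "\<And>s. s \<in> S \<Longrightarrow> x * s \<in> rat_span S" "u \<in> rat_span S"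
  shows "x * u \<in> rat_span S"
proof -
  obtain c where "u = (\<Sum>s\<in>S. of_rat (c s) * s)"
    using assms(3) unfolding rat_span_def by auto
  then have "x * u = (\<Sum>s\<in>S. of_rat (c s) * (x * s))"
    by (simp add: sum_distrib_left algebra_simps)
  also have "\<dots> \<in> rat_span S"
    using assms by (auto intro!: rat_span_sum rat_span_scale)
  finally show ?thesis .
qed

text \<open>Multiplication by \<open>z\<close> on the \<open>\<rat>\<close>-span of a finite list \<open>L\<close> of generators is
  represented by a rational matrix, of which the vector \<open>L\<close> is an eigenvector for \<open>z\<close>.\<close>

lemma rat_span_stable_imp_eigenvalue:
  assumes fin: "finite S" and nz: "s0 \<in> S" "s0 \<noteq> 0"
    and stable: "\<And>s. s \<in> S \<Longrightarrow> z * s \<in> rat_span S"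
  obtains n and A :: "rat mat" where "A \<in> carrier_mat n n" "eigenvalue (map_mat of_rat A) z"
proof -
  obtain L where L: "distinct L" "set L = S"
    using finite_distinct_list[OF fin] by blast
  define n where "n = length L"
  have "\<forall>s\<in>S. \<exists>c. z * s = (\<Sum>t\<in>S. of_rat (c t) * t)"
    using stable unfolding rat_span_def by blast
  then obtain c where c: "\<And>s. s \<in> S \<Longrightarrow> z * s = (\<Sum>t\<in>S. of_rat (c s t) * t)"
    by metis
  define A :: "rat mat" where "A = mat n n (\<lambda>(k, l). c (L ! k) (L ! l))"
  define w where "w = vec n (\<lambda>k. L ! k)"
  have A: "A \<in> carrier_mat n n"
    unfolding A_def by simp
  have bij: "bij_betw ((!) L) {0..<n} S"
    using bij_betw_nth[OF L(1)] L(2) n_def by (simp add: atLeast0LessThan)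
  have "eigenvector (map_mat of_rat A) w z"
    unfolding eigenvector_def
  proof (intro conjI)
    show "w \<in> carrier_vec (dim_row (map_mat of_rat A))"
      using A unfolding w_def by simp
    obtain k where k: "k < n" "L ! k = s0"
      using nz L unfolding n_def by (metis in_set_conv_nth)
    show "w \<noteq> 0\<^sub>v (dim_row (map_mat of_rat A))"
      using k nz A unfolding w_def by (auto simp: vec_eq_iff)
    show "map_mat of_rat A *\<^sub>v w = z \<cdot>\<^sub>v w"
    proof (rule eq_vecI)
      fix k assume "k < dim_vec (z \<cdot>\<^sub>v w)"
      then have k: "k < n" "L ! k \<in> S"
        using L unfolding w_def n_def by auto
      have "(map_mat of_rat A *\<^sub>v w) $ k = (\<Sum>l\<in>{0..<n}. of_rat (c (L ! k) (L ! l)) * L ! l)"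
        using k A by (simp add: scalar_prod_def w_def A_def)
      also have "\<dots> = (\<Sum>t\<in>S. of_rat (c (L ! k) t) * t)"
        by (rule sum.reindex_bij_betw[OF bij, of "\<lambda>t. of_rat (c (L ! k) t) * t"])
      also have "\<dots> = z * L ! k"
        using c[OF k(2)] by simp
      finally show "(map_mat of_rat A *\<^sub>v w) $ k = (z \<cdot>\<^sub>v w) $ k"
        using k by (simp add: w_def)
    qed (simp add: w_def A_def)
  qed
  then show ?thesis
    using that A unfolding eigenvalue_def by blast
qed

lemma eigenvalue_of_rat_mat_algebraic:
  assumes A: "A \<in> carrier_mat n n" and ev: "eigenvalue (map_mat of_rat A) (z :: complex)"
  shows "algebraic z"
proof (rule algebraicI')
  let ?p = "map_poly (of_rat :: rat \<Rightarrow> complex) (char_poly A)"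
  have "map_mat of_rat A \<in> carrier_mat n n"
    using A by simp
  then have "poly (char_poly (map_mat of_rat A)) z = 0"
    using ev eigenvalue_root_char_poly by blast
  moreover have "char_poly (map_mat (of_rat :: rat \<Rightarrow> complex) A) = ?p"
    by (rule of_rat_hom.char_poly_hom[OF A])
  ultimately show "poly ?p z = 0"
    by simp
  have "coeff ?p n = 1"
    using degree_monic_char_poly[OF A] by (simp add: coeff_map_poly)
  then show "?p \<noteq> 0"
    by auto
  show "coeff ?p i \<in> \<rat>" for i
    by (simp add: coeff_map_poly)
qed

lemma algebraic_if_rat_span_stable:
  assumes "finite S" "s0 \<in> S" "s0 \<noteq> 0" "\<And>s. s \<in> S \<Longrightarrow> z * s \<in> rat_span S"
  shows "algebraic z"
  using rat_span_stable_imp_eigenvalue[OF assms] eigenvalue_of_rat_mat_algebraic by metis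

lemma algebraic_monic_relation:
  assumes "algebraic (x :: complex)"
  obtains m c where "x ^ m = (\<Sum>i<m. of_rat (c i) * x ^ i)"
proof -
  obtain p where p: "\<And>i. coeff p i \<in> \<rat>" "p \<noteq> 0" "poly p x = 0"
    using assms algebraic_altdef by blast
  define m where "m = degree p"
  have "\<forall>i. \<exists>q. coeff p i = of_rat q"
    using p(1) by (metis Rats_cases)
  then obtain d where d: "\<And>i. coeff p i = of_rat (d i)"
    by metis
  have lc: "d m \<noteq> 0"
    using p(2) d[of m] unfolding m_def by (metis leading_coeff_0_iff of_rat_0)
  have "0 = (\<Sum>i\<le>m. coeff p i * x ^ i)"
    using p(3) unfolding m_def poly_altdef by simp
  also have "\<dots> = (\<Sum>i<m. coeff p i * x ^ i) + coeff p m * x ^ m"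
    by (simp add: lessThan_Suc_atMost[symmetric])
  finally have rel: "of_rat (d m) * x ^ m = - (\<Sum>i<m. of_rat (d i) * x ^ i)"
    by (simp add: d eq_neg_iff_add_eq_0 add.commute)
  have "x ^ m = inverse (of_rat (d m)) * (of_rat (d m) * x ^ m)"
    using lc by simp
  also have "\<dots> = (\<Sum>i<m. of_rat (- d i / d m) * x ^ i)"
    unfolding rel by (simp add: sum_distrib_left of_rat_divide of_rat_minus field_simps sum_negf)
  finally show ?thesis
    by (rule that)
qed

definition monomials :: "complex \<Rightarrow> complex \<Rightarrow> nat \<Rightarrow> nat \<Rightarrow> complex set" where
  "monomials x y m n = (\<lambda>(i, j). x ^ i * y ^ j) ` ({..<m} \<times> {..<n})"

lemma monomials_swap: "monomials y x n m = monomials x y m n"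
  unfolding monomials_def by (force simp: mult.commute)

lemma monomials_mult_closed:
  assumes rel: "x ^ m = (\<Sum>i<m. of_rat (c i) * x ^ i)" and s: "s \<in> monomials x y m n"
  shows "x * s \<in> rat_span (monomials x y m n)"
proof -
  have fin: "finite (monomials x y m n)"
    unfolding monomials_def by simp
  obtain i j where ij: "i < m" "j < n" "s = x ^ i * y ^ j"
    using s unfolding monomials_def by auto
  have mono: "x ^ i' * y ^ j \<in> monomials x y m n" if "i' < m" for i'
    using that ij unfolding monomials_def by force
  show ?thesis
  proof (cases "Suc i < m")
    case True
    then show ?thesis
      using mono[of "Suc i"] ij rat_span_base[OF fin] by (simp add: mult.assoc)
  next
    case False
    then have "Suc i = m"
      using ij by simp
    then have "x * s = x ^ m * y ^ j"
      using ij by (auto simp: mult.assoc)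
    also have "\<dots> = (\<Sum>i'<m. of_rat (c i') * (x ^ i' * y ^ j))"
      unfolding rel by (simp add: sum_distrib_right mult.assoc)
    also have "\<dots> \<in> rat_span (monomials x y m n)"
      using mono by (intro rat_span_sum) (auto intro: rat_span_scale rat_span_base[OF fin])
    finally show ?thesis .
  qed
qed

text \<open>Take the monomials \<open>x\<^sup>i y\<^sup>j\<close> with \<open>i\<close>, \<open>j\<close> below the degrees of monic relations for
  \<open>x\<close> and \<open>y\<close>.\<close>

lemma algebraic_common_stable_span:
  assumes "algebraic (x :: complex)" "algebraic y"
  obtains S where "finite S" "1 \<in> S"
    "\<And>s. s \<in> S \<Longrightarrow> x * s \<in> rat_span S" "\<And>s. s \<in> S \<Longrightarrow> y * s \<in> rat_span S"
proof -
  obtain m c where x: "x ^ m = (\<Sum>i<m. of_rat (c i) * x ^ i)"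
    using algebraic_monic_relation[OF assms(1)] .
  obtain n d where y: "y ^ n = (\<Sum>i<n. of_rat (d i) * y ^ i)"
    using algebraic_monic_relation[OF assms(2)] .
  have "m \<noteq> 0" "n \<noteq> 0"
    using x y by (metis lessThan_0 power_0 sum.empty zero_neq_one)+
  then have "1 \<in> monomials x y m n"
    unfolding monomials_def by (force intro: image_eqI[of _ _ "(0, 0)"])
  then show ?thesis
    using that[of "monomials x y m n"] monomials_mult_closed[OF x]
      monomials_mult_closed[OF y, of _ x m] monomials_swap
    by (simp add: monomials_def)
qed

lemma algebraic_add:
  assumes "algebraic (x :: complex)" "algebraic y"
  shows "algebraic (x + y)"
proof -
  obtain S where S: "finite S" "1 \<in> S"
    "\<And>s. s \<in> S \<Longrightarrow> x * s \<in> rat_span S" "\<And>s. s \<in> S \<Longrightarrow> y * s \<in> rat_span S"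
    using algebraic_common_stable_span[OF assms] by blast
  show ?thesis
    by (rule algebraic_if_rat_span_stable[OF S(1,2)]) (auto simp: distrib_right intro: rat_span_add S)
qed

lemma algebraic_mult:
  assumes "algebraic (x :: complex)" "algebraic y"
  shows "algebraic (x * y)"
proof -
  obtain S where S: "finite S" "1 \<in> S"
    "\<And>s. s \<in> S \<Longrightarrow> x * s \<in> rat_span S" "\<And>s. s \<in> S \<Longrightarrow> y * s \<in> rat_span S"
    using algebraic_common_stable_span[OF assms] by blast
  show ?thesis
    by (rule algebraic_if_rat_span_stable[OF S(1,2)])
      (auto simp: mult.assoc intro: rat_span_mult_closed[OF S(1)] S)
qed

section \<open>Tropical valuations and their Gauss extensions\<close>

lemma ereal_add_cancel_right_less: "a + ereal c < b + ereal c \<Longrightarrow> a < (b :: ereal)"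
  by (cases a; cases b) auto

lemma ereal_add_less_le_mono:
  "a < A \<Longrightarrow> b \<le> B \<Longrightarrow> B \<noteq> \<infinity> \<Longrightarrow> B \<noteq> -\<infinity> \<Longrightarrow> A \<noteq> \<infinity> \<Longrightarrow> a + b < A + (B :: ereal)"
  by (cases a; cases b; cases A; cases B) auto

lemma trop_add_iff:
  assumes "a \<noteq> \<infinity>" "b \<noteq> \<infinity>"
  shows "u \<in> trop_add a b \<longleftrightarrow> u \<noteq> \<infinity> \<and> u \<le> max a b \<and> (a \<noteq> b \<longrightarrow> u = max a b)"
  using assms unfolding trop_add_def trop_def by (auto simp: max_def)

locale trop_valuation =
  fixes v :: "'a::comm_ring_1 \<Rightarrow> ereal"
  assumes val_0 [simp]: "v 0 = -\<infinity>"
    and val_1 [simp]: "v 1 = 0"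
    and val_mult: "v (x * y) = v x + v y"
    and val_add_le: "v (x + y) \<le> max (v x) (v y)"
    and val_add_eq: "v x \<noteq> v y \<Longrightarrow> v (x + y) = max (v x) (v y)"
    and val_not_PInf: "v x \<noteq> \<infinity>"
begin

lemma val_in_trop_add: "v (x + y) \<in> trop_add (v x) (v y)"
  using trop_add_iff val_add_le val_add_eq val_not_PInf by metis

lemma val_uminus: "v (- x) = v x"
proof -
  have "v (-1) + v (-1) = 0"
    using val_mult[of "-1" "-1"] by simp
  then have "v (-1) = 0"
    using val_not_PInf[of "-1"] by (cases "v (-1)") auto
  then show ?thesis
    using val_mult[of "-1" x] by simp
qed

lemma val_sum_le:
  assumes "finite S" "\<And>i. i \<in> S \<Longrightarrow> v (f i) + ereal c \<le> M"
  shows "v (sum f S) + ereal c \<le> M"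
  using assms
proof (induction S rule: finite_induct)
  case (insert i S)
  have "v (f i + sum f S) + ereal c \<le> max (v (f i)) (v (sum f S)) + ereal c"
    by (rule add_right_mono[OF val_add_le])
  also have "\<dots> \<le> M"
    using insert by (auto simp: max_def)
  finally show ?case
    using insert by simp
qed simp

lemma val_sum_less:
  assumes "finite S" "\<And>i. i \<in> S \<Longrightarrow> v (f i) + ereal c < M" "-\<infinity> < M"
  shows "v (sum f S) + ereal c < M"
  using assms
proof (induction S rule: finite_induct)
  case (insert i S)
  have "v (f i + sum f S) + ereal c \<le> max (v (f i)) (v (sum f S)) + ereal c"
    by (rule add_right_mono[OF val_add_le])
  also have "\<dots> < M"
    using insert by (auto simp: max_def)
  finally show ?case
    using insert by simp
qed simp

lemma val_sum_dominant:
  assumes "finite S" "i0 \<in> S" "\<And>i. i \<in> S - {i0} \<Longrightarrow> v (f i) + ereal c < v (f i0) + ereal c"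
  shows "v (sum f S) = v (f i0)"
proof (cases "S - {i0} = {}")
  case True
  then have "S = {i0}"
    using assms(2) by auto
  then show ?thesis
    by simp
next
  case False
  then obtain i where "i \<in> S - {i0}"
    by auto
  then have "v (f i) + ereal c < v (f i0) + ereal c"
    by (rule assms(3))
  then have "-\<infinity> < v (f i0) + ereal c"
    by (rule le_less_trans[rotated]) simp
  then have "v (sum f (S - {i0})) + ereal c < v (f i0) + ereal c"
    using assms(1,3) by (intro val_sum_less) auto
  then have less: "v (sum f (S - {i0})) < v (f i0)"
    by (rule ereal_add_cancel_right_less)
  have "v (sum f S) = v (f i0 + sum f (S - {i0}))"
    using assms by (simp add: sum.remove)
  also have "\<dots> = max (v (f i0)) (v (sum f (S - {i0})))"
    using less by (intro val_add_eq) simp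
  finally show ?thesis
    using less by simp
qed

end

lemma comm_ring_hom_comp:
  assumes "comm_ring_hom f" "comm_ring_hom g"
  shows "comm_ring_hom (f \<circ> g)"
proof -
  interpret f: comm_ring_hom f by (rule assms(1))
  interpret g: comm_ring_hom g by (rule assms(2))
  show ?thesis
  proof
    fix x y
    show "(f \<circ> g) (x + y) = (f \<circ> g) x + (f \<circ> g) y"
      by (simp add: f.hom_add g.hom_add)
    show "(f \<circ> g) (x * y) = (f \<circ> g) x * (f \<circ> g) y"
      by (simp add: f.hom_mult g.hom_mult)
  qed simp_all
qed

lemma trop_valuation_comp:
  assumes "trop_valuation v" "comm_ring_hom h"
  shows "trop_valuation (v \<circ> h)"
proof -
  interpret v: trop_valuation v by (rule assms(1))
  interpret h: comm_ring_hom h by (rule assms(2))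
  show ?thesis
    by unfold_locales
      (simp_all add: h.hom_add h.hom_mult v.val_mult v.val_add_le v.val_add_eq v.val_not_PInf)
qed

definition triv_val :: "'a::idom \<Rightarrow> ereal" where
  "triv_val c = (if c = 0 then -\<infinity> else 0)"

lemma trop_valuation_triv_val: "trop_valuation triv_val"
proof
  fix x y :: 'a
  show "triv_val (x + y) \<le> max (triv_val x) (triv_val y)"
    by (simp add: triv_val_def)
  assume "triv_val x \<noteq> triv_val y"
  then have "x = 0 \<and> y \<noteq> 0 \<or> x \<noteq> 0 \<and> y = 0"
    by (auto simp: triv_val_def split: if_splits)
  then show "triv_val (x + y) = max (triv_val x) (triv_val y)"
    by (auto simp: triv_val_def)
qed (simp_all add: triv_val_def)

text \<open>Since \<open>0 \<cdot> -\<infinity> = 0\<close> in \<open>ereal\<close>, the weight \<open>b = -\<infinity>\<close> gives \<open>p \<mapsto> v(p\<^sub>0)\<close>.\<close>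

definition gauss_term :: "('a::comm_ring_1 \<Rightarrow> ereal) \<Rightarrow> ereal \<Rightarrow> 'a poly \<Rightarrow> nat \<Rightarrow> ereal" where
  "gauss_term v b P j = v (coeff P j) + ereal (real j) * b"

definition gauss_ext :: "('a::comm_ring_1 \<Rightarrow> ereal) \<Rightarrow> ereal \<Rightarrow> 'a poly \<Rightarrow> ereal" where
  "gauss_ext v b P = (SUP j. gauss_term v b P j)"

lemma gauss_term_le_ext: "gauss_term v b P j \<le> gauss_ext v b P"
  unfolding gauss_ext_def by (rule SUP_upper) simp

lemma gauss_ext_le: "(\<And>j. gauss_term v b P j \<le> M) \<Longrightarrow> gauss_ext v b P \<le> M"
  unfolding gauss_ext_def by (rule SUP_least)

context trop_valuation
begin

lemma gauss_term_real: "gauss_term v (ereal \<beta>) P j = v (coeff P j) + ereal (real j * \<beta>)"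
  by (simp add: gauss_term_def)

lemma gauss_ext_attained: "\<exists>j\<le>degree P. gauss_ext v (ereal \<beta>) P = gauss_term v (ereal \<beta>) P j"
proof -
  let ?g = "gauss_term v (ereal \<beta>) P"
  define M where "M = Max (?g ` {..degree P})"
  have "M \<in> ?g ` {..degree P}"
    unfolding M_def by (rule Max_in) auto
  then obtain j0 where j0: "j0 \<le> degree P" "M = ?g j0"
    by auto
  have "?g j \<le> M" for j
  proof (cases "j \<le> degree P")
    case True
    then show ?thesis
      unfolding M_def by (intro Max_ge) auto
  next
    case False
    then show ?thesis
      by (simp add: gauss_term_real coeff_eq_0)
  qed
  then have "gauss_ext v (ereal \<beta>) P = M"
    using j0 by (metis antisym gauss_ext_le gauss_term_le_ext)
  then show ?thesis
    using j0 by blast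
qed

lemma gauss_ext_not_PInf: "gauss_ext v (ereal \<beta>) P \<noteq> \<infinity>"
  using gauss_ext_attained[of P \<beta>] val_not_PInf by (auto simp: gauss_term_real)

lemma gauss_term_mult:
  assumes "i \<le> n"
  shows "v (coeff P i * coeff Q (n - i)) + ereal (real n * \<beta>)
    = gauss_term v (ereal \<beta>) P i + gauss_term v (ereal \<beta>) Q (n - i)"
proof -
  have "real n * \<beta> = real i * \<beta> + real (n - i) * \<beta>"
    using assms by (simp add: of_nat_diff algebra_simps)
  then show ?thesis
    by (simp add: gauss_term_real val_mult add_ac)
qed

lemma gauss_ext_mult_le:
  "gauss_ext v (ereal \<beta>) (P * Q) \<le> gauss_ext v (ereal \<beta>) P + gauss_ext v (ereal \<beta>) Q"
proof (rule gauss_ext_le)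
  fix n
  have "v (coeff (P * Q) n) + ereal (real n * \<beta>) \<le> gauss_ext v (ereal \<beta>) P + gauss_ext v (ereal \<beta>) Q"
    unfolding coeff_mult
  proof (rule val_sum_le)
    fix i assume "i \<in> {..n}"
    then show "v (coeff P i * coeff Q (n - i)) + ereal (real n * \<beta>)
        \<le> gauss_ext v (ereal \<beta>) P + gauss_ext v (ereal \<beta>) Q"
      by (simp add: gauss_term_mult add_mono gauss_term_le_ext)
  qed simp
  then show "gauss_term v (ereal \<beta>) (P * Q) n \<le> gauss_ext v (ereal \<beta>) P + gauss_ext v (ereal \<beta>) Q"
    by (simp add: gauss_term_real)
qed

lemma gauss_ext_least_attained:
  obtains j0 where "gauss_term v (ereal \<beta>) P j0 = gauss_ext v (ereal \<beta>) P"
    "\<And>i. i < j0 \<Longrightarrow> gauss_term v (ereal \<beta>) P i < gauss_ext v (ereal \<beta>) P"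
proof -
  let ?g = "gauss_ext v (ereal \<beta>) P" and ?w = "gauss_term v (ereal \<beta>) P"
  define j0 where "j0 = (LEAST j. ?w j = ?g)"
  have "?w j0 = ?g"
    unfolding j0_def using gauss_ext_attained by (metis (mono_tags) LeastI)
  moreover have "?w i < ?g" if "i < j0" for i
    using not_less_Least[OF that[unfolded j0_def]] gauss_term_le_ext[of v _ P i] by (simp add: order_less_le)
  ultimately show ?thesis
    using that by blast
qed

text \<open>Gauss's lemma: the coefficient of \<open>P Q\<close> at \<open>j\<^sub>0 + k\<^sub>0\<close>, for the least indices \<open>j\<^sub>0\<close>, \<open>k\<^sub>0\<close> at
  which the maxima for \<open>P\<close> and \<open>Q\<close> are attained, has a single dominant summand.\<close>

lemma gauss_ext_mult_ge:
  assumes finP: "gauss_ext v (ereal \<beta>) P \<noteq> -\<infinity>" and finQ: "gauss_ext v (ereal \<beta>) Q \<noteq> -\<infinity>"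
  shows "gauss_ext v (ereal \<beta>) P + gauss_ext v (ereal \<beta>) Q \<le> gauss_ext v (ereal \<beta>) (P * Q)"
proof -
  let ?g = "gauss_ext v (ereal \<beta>)" and ?w = "gauss_term v (ereal \<beta>)"
  have finite: "?g P \<noteq> \<infinity>" "?g Q \<noteq> \<infinity>"
    using gauss_ext_not_PInf by auto
  obtain j0 where j0: "?w P j0 = ?g P" and ltP: "\<And>i. i < j0 \<Longrightarrow> ?w P i < ?g P"
    using gauss_ext_least_attained by blast
  obtain k0 where k0: "?w Q k0 = ?g Q" and ltQ: "\<And>i. i < k0 \<Longrightarrow> ?w Q i < ?g Q"
    using gauss_ext_least_attained by blast
  define n where "n = j0 + k0"
  let ?f = "\<lambda>i. coeff P i * coeff Q (n - i)"
  have dominant: "v (?f j0) + ereal (real n * \<beta>) = ?g P + ?g Q"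
    using gauss_term_mult[of j0 n P Q \<beta>] j0 k0 unfolding n_def by simp
  have "v (coeff (P * Q) n) = v (?f j0)"
    unfolding coeff_mult
  proof (rule val_sum_dominant[where c = "real n * \<beta>"])
    fix i assume i: "i \<in> {..n} - {j0}"
    have "v (?f i) + ereal (real n * \<beta>) = ?w P i + ?w Q (n - i)"
      using gauss_term_mult[of i n P Q \<beta>] i by simp
    also have "\<dots> < ?g P + ?g Q"
    proof (cases "i < j0")
      case True
      then show ?thesis
        using ltP gauss_term_le_ext[of v _ Q "n - i"] finP finQ finite
        by (intro ereal_add_less_le_mono) auto
    next
      case False
      then have "n - i < k0"
        using i unfolding n_def by auto
      then have "?w Q (n - i) + ?w P i < ?g Q + ?g P"
        using ltQ gauss_term_le_ext[of v _ P i] finP finQ finite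
        by (intro ereal_add_less_le_mono) auto
      then show ?thesis
        by (simp add: add.commute)
    qed
    finally show "v (?f i) + ereal (real n * \<beta>) < v (?f j0) + ereal (real n * \<beta>)"
      unfolding dominant .
  qed (auto simp: n_def)
  then have "?w (P * Q) n = ?g P + ?g Q"
    using dominant by (simp add: gauss_term_real)
  then show ?thesis
    using gauss_term_le_ext by metis
qed

lemma gauss_ext_mult:
  "gauss_ext v (ereal \<beta>) (P * Q) = gauss_ext v (ereal \<beta>) P + gauss_ext v (ereal \<beta>) Q"
proof (cases "gauss_ext v (ereal \<beta>) P = -\<infinity> \<or> gauss_ext v (ereal \<beta>) Q = -\<infinity>")
  case True
  then have minf: "gauss_ext v (ereal \<beta>) P + gauss_ext v (ereal \<beta>) Q = -\<infinity>"
    using gauss_ext_not_PInf[of \<beta> P] gauss_ext_not_PInf[of \<beta> Q]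
    by (cases "gauss_ext v (ereal \<beta>) P"; cases "gauss_ext v (ereal \<beta>) Q") auto
  show ?thesis
    using gauss_ext_mult_le[of \<beta> P Q] unfolding minf by simp
next
  case False
  then show ?thesis
    using gauss_ext_mult_le gauss_ext_mult_ge by (simp add: antisym)
qed

lemma gauss_ext_add_le:
  "gauss_ext v (ereal \<beta>) (P + Q) \<le> max (gauss_ext v (ereal \<beta>) P) (gauss_ext v (ereal \<beta>) Q)"
proof (rule gauss_ext_le)
  fix j
  have "v (coeff P j + coeff Q j) + ereal (real j * \<beta>)
      \<le> max (v (coeff P j)) (v (coeff Q j)) + ereal (real j * \<beta>)"
    by (rule add_right_mono[OF val_add_le])
  also have "\<dots> = max (gauss_term v (ereal \<beta>) P j) (gauss_term v (ereal \<beta>) Q j)"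
    by (cases "v (coeff P j)"; cases "v (coeff Q j)") (auto simp: gauss_term_real max_def)
  also have "\<dots> \<le> max (gauss_ext v (ereal \<beta>) P) (gauss_ext v (ereal \<beta>) Q)"
    by (intro max.mono gauss_term_le_ext)
  finally show "gauss_term v (ereal \<beta>) (P + Q) j \<le> max (gauss_ext v (ereal \<beta>) P) (gauss_ext v (ereal \<beta>) Q)"
    by (simp add: gauss_term_real)
qed

lemma gauss_ext_add_eq:
  assumes "gauss_ext v (ereal \<beta>) Q < gauss_ext v (ereal \<beta>) P"
  shows "gauss_ext v (ereal \<beta>) (P + Q) = gauss_ext v (ereal \<beta>) P"
proof (rule antisym)
  show "gauss_ext v (ereal \<beta>) (P + Q) \<le> gauss_ext v (ereal \<beta>) P"
    using gauss_ext_add_le[of \<beta> P Q] assms by simp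
  obtain j where j: "gauss_ext v (ereal \<beta>) P = gauss_term v (ereal \<beta>) P j"
    using gauss_ext_attained by blast
  have "gauss_term v (ereal \<beta>) Q j < gauss_term v (ereal \<beta>) P j"
    using gauss_term_le_ext[of v "ereal \<beta>" Q j] assms unfolding j by (rule le_less_trans)
  then have "v (coeff Q j) < v (coeff P j)"
    by (cases "v (coeff Q j)"; cases "v (coeff P j)") (auto simp: gauss_term_real)
  then have "gauss_term v (ereal \<beta>) (P + Q) j = gauss_ext v (ereal \<beta>) P"
    using j val_add_eq[of "coeff P j" "coeff Q j"] by (simp add: gauss_term_real)
  then show "gauss_ext v (ereal \<beta>) P \<le> gauss_ext v (ereal \<beta>) (P + Q)"
    using gauss_term_le_ext by metis
qed

lemma gauss_ext_const_real: "gauss_ext v (ereal \<beta>) [:c:] = v c"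
  using gauss_ext_attained[of "[:c:]" \<beta>] by (auto simp: gauss_term_real)

lemma gauss_ext_MInf: "gauss_ext v (-\<infinity>) P = v (coeff P 0)"
proof (rule antisym)
  show "gauss_ext v (-\<infinity>) P \<le> v (coeff P 0)"
  proof (rule gauss_ext_le)
    fix j
    show "gauss_term v (-\<infinity>) P j \<le> v (coeff P 0)"
      using val_not_PInf[of "coeff P j"]
      by (cases "j = 0"; cases "v (coeff P j)") (auto simp: gauss_term_def)
  qed
  show "v (coeff P 0) \<le> gauss_ext v (-\<infinity>) P"
    using gauss_term_le_ext[of v "-\<infinity>" P 0] by (simp add: gauss_term_def)
qed

theorem trop_valuation_gauss_ext:
  assumes "b \<noteq> \<infinity>"
  shows "trop_valuation (gauss_ext v b)"
proof (cases b)
  case (real \<beta>)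
  show ?thesis
    unfolding real
  proof
    show "gauss_ext v (ereal \<beta>) 0 = -\<infinity>"
      using gauss_ext_const_real[of \<beta> 0] by simp
    show "gauss_ext v (ereal \<beta>) 1 = 0"
      using gauss_ext_const_real[of \<beta> 1] by (simp add: one_pCons)
    fix x y
    show "gauss_ext v (ereal \<beta>) x \<noteq> gauss_ext v (ereal \<beta>) y \<Longrightarrow>
        gauss_ext v (ereal \<beta>) (x + y) = max (gauss_ext v (ereal \<beta>) x) (gauss_ext v (ereal \<beta>) y)"
      using gauss_ext_add_eq[of \<beta> y x] gauss_ext_add_eq[of \<beta> x y]
      by (cases "gauss_ext v (ereal \<beta>) x < gauss_ext v (ereal \<beta>) y") (auto simp: add.commute max_def)
  qed (simp_all add: gauss_ext_mult gauss_ext_add_le gauss_ext_not_PInf)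
next
  case MInf
  have "trop_valuation (v \<circ> (\<lambda>p. poly p 0))"
    by (rule trop_valuation_comp[OF trop_valuation_axioms poly_hom.comm_ring_hom_axioms])
  then show ?thesis
    unfolding MInf by (simp add: gauss_ext_MInf[abs_def] poly_0_coeff_0 comp_def)
qed (use assms in simp)

lemma gauss_ext_const: "b \<noteq> \<infinity> \<Longrightarrow> gauss_ext v b [:c:] = v c"
  by (cases b) (auto simp: gauss_ext_const_real gauss_ext_MInf)

lemma gauss_ext_linear:
  assumes "b \<noteq> \<infinity>"
  shows "gauss_ext v b [:x, 1:] = max (v x) b"
proof (cases b)
  case (real \<beta>)
  have "gauss_term v (ereal \<beta>) [:x, 1:] j \<le> max (v x) (ereal \<beta>)" for j
    by (cases j) (auto simp: gauss_term_real coeff_pCons split: nat.splits)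
  then have "gauss_ext v (ereal \<beta>) [:x, 1:] \<le> max (v x) (ereal \<beta>)"
    by (rule gauss_ext_le)
  moreover have "v x \<le> gauss_ext v (ereal \<beta>) [:x, 1:]" "ereal \<beta> \<le> gauss_ext v (ereal \<beta>) [:x, 1:]"
    using gauss_term_le_ext[of v "ereal \<beta>" "[:x, 1:]" 0] gauss_term_le_ext[of v "ereal \<beta>" "[:x, 1:]" 1]
    by (simp_all add: gauss_term_real)
  ultimately show ?thesis
    unfolding real by (simp add: antisym)
qed (use assms in \<open>simp_all add: gauss_ext_MInf\<close>)

end

lemma kbar_0: "0 \<in> kbar" and kbar_1: "1 \<in> kbar"
  unfolding kbar_def by auto

lemma kbar_add: "x \<in> kbar \<Longrightarrow> y \<in> kbar \<Longrightarrow> x + y \<in> kbar"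
  unfolding kbar_def by (simp add: algebraic_add)

lemma kbar_mult: "x \<in> kbar \<Longrightarrow> y \<in> kbar \<Longrightarrow> x * y \<in> kbar"
  unfolding kbar_def by (simp add: algebraic_mult)

lemma kbar_sum: "finite I \<Longrightarrow> (\<And>i. i \<in> I \<Longrightarrow> f i \<in> kbar) \<Longrightarrow> sum f I \<in> kbar"
  by (induction I rule: finite_induct) (auto intro: kbar_0 kbar_add)

lemma polyA_pCons: "pCons c p \<in> polyA \<longleftrightarrow> c \<in> kbar \<and> p \<in> polyA"
  unfolding polyA_def by (auto simp: coeff_pCons split: nat.splits)

lemma polyA_const: "c \<in> kbar \<Longrightarrow> [:c:] \<in> polyA"
  unfolding polyA_def by (auto simp: coeff_pCons kbar_0 split: nat.splits)

lemma polyA_0: "0 \<in> polyA" and polyA_1: "1 \<in> polyA"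
  using polyA_const[OF kbar_0] polyA_const[OF kbar_1] by (simp_all add: one_pCons)

lemma polyA_var: "[:0, 1:] \<in> polyA"
  by (simp add: polyA_pCons polyA_0 kbar_0 kbar_1)

lemma polyA_add: "p \<in> polyA \<Longrightarrow> q \<in> polyA \<Longrightarrow> p + q \<in> polyA"
  unfolding polyA_def by (auto intro: kbar_add)

lemma polyA_mult: "p \<in> polyA \<Longrightarrow> q \<in> polyA \<Longrightarrow> p * q \<in> polyA"
  unfolding polyA_def by (auto simp: coeff_mult intro!: kbar_sum kbar_mult)

lemma polyA_sum: "finite I \<Longrightarrow> (\<And>i. i \<in> I \<Longrightarrow> f i \<in> polyA) \<Longrightarrow> sum f I \<in> polyA"
  by (induction I rule: finite_induct) (auto intro: polyA_0 polyA_add)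

lemma polyAA_iff: "P \<in> polyAA \<longleftrightarrow> (\<forall>i. coeff P i \<in> polyA)"
  unfolding polyAA_def polyA_def by auto

lemma polyAA_const: "a \<in> polyA \<Longrightarrow> [:a:] \<in> polyAA"
  unfolding polyAA_iff by (auto simp: coeff_pCons polyA_0 split: nat.splits)

lemma polyAA_0: "0 \<in> polyAA" and polyAA_1: "1 \<in> polyAA"
  using polyAA_const[OF polyA_0] polyAA_const[OF polyA_1] by (simp_all add: one_pCons)

lemma polyAA_add: "P \<in> polyAA \<Longrightarrow> Q \<in> polyAA \<Longrightarrow> P + Q \<in> polyAA"
  unfolding polyAA_iff by (auto intro: polyA_add)

lemma polyAA_mult: "P \<in> polyAA \<Longrightarrow> Q \<in> polyAA \<Longrightarrow> P * Q \<in> polyAA"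
  unfolding polyAA_iff coeff_mult by (auto intro!: polyA_sum polyA_mult)

lemma comm_ring_hom_const_poly: "comm_ring_hom (\<lambda>c :: 'a :: comm_ring_1. [:c:])"
  by unfold_locales (simp_all add: one_pCons)

lemma comm_ring_hom_j1: "comm_ring_hom j1"
  unfolding j1_def by (rule comm_ring_hom_const_poly)

lemma comm_ring_hom_j2: "comm_ring_hom j2"
proof -
  interpret map_poly_comm_ring_hom "\<lambda>c :: complex. [:c:]"
    using comm_ring_hom_const_poly by (simp add: map_poly_comm_ring_hom_def)
  show ?thesis
    unfolding j2_def by (rule comm_ring_hom_axioms)
qed

lemma comm_ring_hom_Delta: "comm_ring_hom Delta"
proof -
  have "Delta = (\<lambda>P. P \<circ>\<^sub>p [:[:0, 1:], 1:]) \<circ> j2"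
    unfolding Delta_def j2_def by auto
  then show ?thesis
    using comm_ring_hom_comp[OF pcompose_hom.comm_ring_hom_axioms comm_ring_hom_j2] by metis
qed

lemma j1_polyAA: "a \<in> polyA \<Longrightarrow> j1 a \<in> polyAA"
  unfolding j1_def by (rule polyAA_const)

lemma j2_polyAA:
  assumes "a \<in> polyA"
  shows "j2 a \<in> polyAA"
proof -
  have "coeff a i \<in> kbar" for i
    using assms by (simp add: polyA_def)
  then show ?thesis
    unfolding polyAA_iff j2_def by (simp add: coeff_map_poly polyA_const)
qed

lemma j1_var: "j1 [:0, 1:] = [:[:0, 1:]:]"
  by (simp add: j1_def)

lemma j2_var: "j2 [:0, 1:] = [:0, 1:]"
  by (simp add: j2_def)

lemma Delta_var: "Delta [:0, 1:] = [:[:0, 1:], 1:]"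
  by (simp add: Delta_def pcompose_pCons)

lemma Delta_const: "Delta [:c:] = [:[:c:]:]"
  by (cases "c = 0") (simp_all add: Delta_def)

lemma Delta_polyAA: "a \<in> polyA \<Longrightarrow> Delta a \<in> polyAA"
proof (induction a)
  case (pCons c p)
  interpret Delta: comm_ring_hom Delta
    by (rule comm_ring_hom_Delta)
  have "c \<in> kbar" "p \<in> polyA"
    using pCons.prems by (simp_all add: polyA_pCons)
  moreover have "[:[:0, 1:], 1:] \<in> polyAA"
    unfolding polyAA_iff by (auto simp: coeff_pCons polyA_var polyA_1 polyA_0 split: nat.splits)
  moreover have "pCons c p = [:c:] + [:0, 1:] * p"
    by simp
  then have "Delta (pCons c p) = [:[:c:]:] + [:[:0, 1:], 1:] * Delta p"
    by (simp only: Delta.hom_add Delta.hom_mult Delta_const Delta_var)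
  ultimately show ?case
    using pCons.IH by (metis polyAA_add polyAA_mult polyAA_const polyA_const)
qed (simp add: Delta_def polyAA_0)

section \<open>Points of \<open>G\<^sup>a\<^sup>n\<close> with negative value at \<open>T\<close>\<close>

lemma trop_add_le_max: "u \<in> trop_add a b \<Longrightarrow> u \<le> max a b"
  unfolding trop_add_def by (auto split: if_splits)

lemma restrict_valuation_in_Gan:
  assumes "trop_valuation u" "\<And>c. c \<in> kbar \<Longrightarrow> c \<noteq> 0 \<Longrightarrow> u [:c:] = 0"
  shows "restrict u polyA \<in> Gan"
proof -
  interpret trop_valuation u by (rule assms(1))
  show ?thesis
    unfolding Gan_def trop_hom_def using assms(2) polyA_0 polyA_1 polyA_const
    by (auto simp: trop_def val_mult val_not_PInf val_in_trop_add polyA_mult polyA_add)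
qed

lemma restrict_valuation_in_Gan2:
  assumes "trop_valuation u" "\<And>c. c \<in> kbar \<Longrightarrow> c \<noteq> 0 \<Longrightarrow> u [:[:c:]:] = 0"
  shows "restrict u polyAA \<in> Gan2"
proof -
  interpret trop_valuation u by (rule assms(1))
  show ?thesis
    unfolding Gan2_def trop_hom_def using assms(2) polyAA_0 polyAA_1 polyAA_const polyA_const
    by (auto simp: trop_def val_mult val_not_PInf val_in_trop_add polyAA_mult polyAA_add)
qed

lemma GanD:
  assumes "\<phi> \<in> Gan"
  shows "\<phi> \<in> polyA \<rightarrow>\<^sub>E trop" "\<phi> 0 = -\<infinity>"
    "\<And>x y. x \<in> polyA \<Longrightarrow> y \<in> polyA \<Longrightarrow> \<phi> (x * y) = \<phi> x + \<phi> y"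
    "\<And>x y. x \<in> polyA \<Longrightarrow> y \<in> polyA \<Longrightarrow> \<phi> (x + y) \<in> trop_add (\<phi> x) (\<phi> y)"
    "\<And>c. c \<in> kbar \<Longrightarrow> c \<noteq> 0 \<Longrightarrow> \<phi> [:c:] = 0"
  using assms unfolding Gan_def trop_hom_def by auto

text \<open>Once \<open>\<phi>(T) < 0\<close>, every \<open>p = c + T q\<close> with \<open>c \<noteq> 0\<close> is a unit for \<open>\<phi>\<close>, so \<open>\<phi>\<close> is
  determined by \<open>\<phi>(T)\<close>: it is the Gauss valuation with weight \<open>\<phi>(T)\<close>.\<close>

context
  fixes \<phi> assumes \<phi>: "\<phi> \<in> Gan" and neg: "\<phi> [:0, 1:] < 0"
begin

lemma Gan_nonpos: "p \<in> polyA \<Longrightarrow> \<phi> p \<le> 0"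
proof (induction p)
  case (pCons c p)
  then have c: "c \<in> kbar" and p: "p \<in> polyA"
    by (simp_all add: polyA_pCons)
  have "\<phi> ([:0, 1:] * p) = \<phi> [:0, 1:] + \<phi> p"
    by (rule GanD(3)[OF \<phi> polyA_var p])
  also have "\<dots> \<le> 0"
    using pCons.IH[OF p] neg by (simp add: add_nonpos_nonpos)
  finally have "\<phi> ([:0, 1:] * p) \<le> 0" .
  moreover have "\<phi> [:c:] \<le> 0"
    using GanD(2,5)[OF \<phi>] c by (cases "c = 0") auto
  moreover have "\<phi> (pCons c p) \<in> trop_add (\<phi> [:c:]) (\<phi> ([:0, 1:] * p))"
    using GanD(4)[OF \<phi> polyA_const[OF c] polyA_mult[OF polyA_var p]] by simp
  ultimately show ?case
    by (meson trop_add_le_max max.boundedI order_trans)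
qed (simp add: GanD(2)[OF \<phi>])

lemma Gan_unit:
  assumes "pCons c p \<in> polyA" "c \<noteq> 0"
  shows "\<phi> (pCons c p) = 0"
proof -
  have c: "c \<in> kbar" and p: "p \<in> polyA"
    using assms by (simp_all add: polyA_pCons)
  define q where "q = [:0, 1:] * p"
  have "\<phi> q = \<phi> [:0, 1:] + \<phi> p"
    unfolding q_def by (rule GanD(3)[OF \<phi> polyA_var p])
  also have "\<dots> \<le> \<phi> [:0, 1:] + 0"
    by (rule add_left_mono[OF Gan_nonpos[OF p]])
  finally have "\<phi> q < 0"
    using neg by simp
  moreover have "\<phi> (pCons c p) \<in> trop_add (\<phi> [:c:]) (\<phi> q)"
    using GanD(4)[OF \<phi> polyA_const[OF c] polyA_mult[OF polyA_var p]] by (simp add: q_def)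
  moreover have "\<phi> [:c:] = 0"
    using GanD(5)[OF \<phi> c assms(2)] .
  ultimately show ?thesis
    unfolding trop_add_def by (auto simp: max_def split: if_splits)
qed

end

lemma Gan_eqI:
  assumes \<phi>: "\<phi> \<in> Gan" and \<psi>: "\<psi> \<in> Gan"
    and eq: "\<phi> [:0, 1:] = \<psi> [:0, 1:]" and neg: "\<phi> [:0, 1:] < 0"
  shows "\<phi> = \<psi>"
proof
  fix p
  show "\<phi> p = \<psi> p"
  proof (cases "p \<in> polyA")
    case True
    then show ?thesis
    proof (induction p)
      case (pCons c p)
      then have p: "p \<in> polyA"
        by (simp add: polyA_pCons)
      show ?case
      proof (cases "c = 0")
        case True
        then have "pCons c p = [:0, 1:] * p"
          by simp
        then show ?thesis
          using GanD(3)[OF \<phi> polyA_var p] GanD(3)[OF \<psi> polyA_var p] eq pCons.IH[OF p] by simp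
      next
        case False
        then show ?thesis
          using Gan_unit[OF \<phi> neg pCons.prems] Gan_unit[OF \<psi> _ pCons.prems] eq neg by simp
      qed
    qed (simp add: GanD(2)[OF \<phi>] GanD(2)[OF \<psi>])
  next
    case False
    then show ?thesis
      using PiE_arb[OF GanD(1)[OF \<phi>]] PiE_arb[OF GanD(1)[OF \<psi>]] by simp
  qed
qed

lemma gauss_ext_triv_val_var: "r \<noteq> \<infinity> \<Longrightarrow> gauss_ext triv_val r [:0, 1:] = r"
  using trop_valuation.gauss_ext_linear[OF trop_valuation_triv_val, of r 0] by (simp add: triv_val_def)

lemma bij_betw_Hset_trop_neg: "bij_betw (\<lambda>h. h [:0, 1:]) Hset trop_neg"
proof (rule bij_betw_imageI)
  show "inj_on (\<lambda>h. h [:0, 1:]) Hset"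
    by (rule inj_onI) (auto simp: Hset_def intro: Gan_eqI)
  have "r \<in> (\<lambda>h. h [:0, 1:]) ` Hset" if r: "r \<in> trop_neg" for r
  proof -
    have "r \<noteq> \<infinity>"
      using r by (auto simp: trop_neg_def)
    then have "restrict (gauss_ext triv_val r) polyA \<in> Gan"
      by (intro restrict_valuation_in_Gan trop_valuation.trop_valuation_gauss_ext trop_valuation_triv_val)
        (simp_all add: trop_valuation.gauss_ext_const[OF trop_valuation_triv_val] triv_val_def)
    moreover have "restrict (gauss_ext triv_val r) polyA [:0, 1:] = r"
      using polyA_var gauss_ext_triv_val_var[OF \<open>r \<noteq> \<infinity>\<close>] by simp
    ultimately show ?thesis
      using r unfolding Hset_def trop_neg_def
      by (intro image_eqI[of _ _ "restrict (gauss_ext triv_val r) polyA"]) auto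
  qed
  then show "(\<lambda>h. h [:0, 1:]) ` Hset = trop_neg"
    by (auto simp: Hset_def trop_neg_def)
qed

section \<open>Berkovich's hyperoperation on \<open>H\<close>\<close>

lemma berk_op_var_in_trop_add:
  assumes "f \<in> berk_op g h"
  shows "f [:0, 1:] \<in> trop_add (g [:0, 1:]) (h [:0, 1:])"
proof -
  obtain \<beta> where \<beta>: "\<beta> \<in> Gan2"
    and eq: "\<And>a. a \<in> polyA \<Longrightarrow> \<beta> (j1 a) = g a \<and> \<beta> (j2 a) = h a \<and> f a = \<beta> (Delta a)"
    using assms unfolding berk_op_def by blast
  have "Delta [:0, 1:] = j1 [:0, 1:] + j2 [:0, 1:]"
    by (simp add: Delta_var j1_var j2_var)
  then have "f [:0, 1:] = \<beta> (j1 [:0, 1:] + j2 [:0, 1:])"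
    using eq[OF polyA_var] by simp
  also have "\<dots> \<in> trop_add (\<beta> (j1 [:0, 1:])) (\<beta> (j2 [:0, 1:]))"
    using \<beta> j1_polyAA[OF polyA_var] j2_polyAA[OF polyA_var] unfolding Gan2_def trop_hom_def by blast
  finally show ?thesis
    using eq[OF polyA_var] by simp
qed

lemma trop_add_neg: "a < 0 \<Longrightarrow> b < 0 \<Longrightarrow> u \<in> trop_add a b \<Longrightarrow> u < 0"
  unfolding trop_add_def by (auto split: if_splits)

lemma berk_op_Hset_closed:
  assumes "g \<in> Hset" "h \<in> Hset" "f \<in> berk_op g h"
  shows "f \<in> Hset"
  using assms berk_op_var_in_trop_add[OF assms(3)] trop_add_neg
  unfolding Hset_def berk_op_def by blast

lemma berk_op_realise:
  assumes g: "g \<in> Hset" and h: "h \<in> Hset" and u: "trop_valuation u"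
    and const: "\<And>c. c \<in> kbar \<Longrightarrow> c \<noteq> 0 \<Longrightarrow> u [:[:c:]:] = 0"
    and u1: "u (j1 [:0, 1:]) = g [:0, 1:]" and u2: "u (j2 [:0, 1:]) = h [:0, 1:]"
  shows "restrict (u \<circ> Delta) polyA \<in> berk_op g h"
proof -
  have pullback: "restrict (u \<circ> j) polyA \<in> Gan" if "comm_ring_hom j" "\<And>c. j [:c:] = [:[:c:]:]" for j
    by (rule restrict_valuation_in_Gan[OF trop_valuation_comp[OF u that(1)]]) (simp add: that(2) const)
  have j1_const: "j1 [:c:] = [:[:c:]:]" and j2_const: "j2 [:c:] = [:[:c:]:]" for c
    by (simp add: j1_def) (cases "c = 0"; simp add: j2_def)
  have "restrict (u \<circ> j1) polyA = g"
    by (rule Gan_eqI[OF pullback[OF comm_ring_hom_j1 j1_const]]) (use g u1 polyA_var in \<open>auto simp: Hset_def\<close>)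
  moreover have "restrict (u \<circ> j2) polyA = h"
    by (rule Gan_eqI[OF pullback[OF comm_ring_hom_j2 j2_const]]) (use h u2 polyA_var in \<open>auto simp: Hset_def\<close>)
  moreover have "restrict u polyAA \<in> Gan2"
    by (rule restrict_valuation_in_Gan2[OF u]) (rule const)
  moreover have "restrict (u \<circ> Delta) polyA \<in> Gan"
    by (rule pullback[OF comm_ring_hom_Delta Delta_const])
  ultimately show ?thesis
    unfolding berk_op_def
    by (auto simp: j1_polyAA j2_polyAA Delta_polyAA intro!: bexI[of _ "restrict u polyAA"])
qed

definition gauss2 :: "ereal \<Rightarrow> ereal \<Rightarrow> complex poly poly \<Rightarrow> ereal" where
  "gauss2 r s = gauss_ext (gauss_ext triv_val r) s"

lemma gauss_ext_triv_val_const: "r \<noteq> \<infinity> \<Longrightarrow> gauss_ext triv_val r [:c:] = triv_val c"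
  by (rule trop_valuation.gauss_ext_const[OF trop_valuation_triv_val])

lemma gauss2:
  assumes "r \<noteq> \<infinity>" "s \<noteq> \<infinity>"
  shows trop_valuation_gauss2: "trop_valuation (gauss2 r s)"
    and gauss2_const: "gauss2 r s [:p:] = gauss_ext triv_val r p"
    and gauss2_linear: "gauss2 r s [:p, 1:] = max (gauss_ext triv_val r p) s"
proof -
  interpret v: trop_valuation "gauss_ext triv_val r"
    by (rule trop_valuation.trop_valuation_gauss_ext[OF trop_valuation_triv_val assms(1)])
  show "trop_valuation (gauss2 r s)"
    unfolding gauss2_def by (rule v.trop_valuation_gauss_ext[OF assms(2)])
  show "gauss2 r s [:p:] = gauss_ext triv_val r p"
    unfolding gauss2_def by (rule v.gauss_ext_const[OF assms(2)])
  show "gauss2 r s [:p, 1:] = max (gauss_ext triv_val r p) s"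
    unfolding gauss2_def by (rule v.gauss_ext_linear[OF assms(2)])
qed

text \<open>For \<open>r \<noteq> s\<close> the Gauss valuation with weights \<open>r, s\<close> does it; for \<open>r = s\<close> and
  \<open>t \<le> r\<close> take the Gauss valuation with weights \<open>r, t\<close> after the substitution \<open>T\<^sub>2 \<mapsto> T\<^sub>2 - T\<^sub>1\<close>, which sends \<open>T\<^sub>1 + T\<^sub>2\<close> to \<open>T\<^sub>2\<close>.\<close>

lemma trop_add_realised_by_valuation:
  assumes r: "r \<noteq> \<infinity>" and s: "s \<noteq> \<infinity>" and t: "t \<in> trop_add r s"
  obtains u where "trop_valuation u" "\<And>c. c \<noteq> 0 \<Longrightarrow> u [:[:c:]:] = 0"
    "u (j1 [:0, 1:]) = r" "u (j2 [:0, 1:]) = s" "u (Delta [:0, 1:]) = t"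
proof (cases "r = s")
  case False
  then have "t = max r s"
    using t unfolding trop_add_def by simp
  note gauss2 = gauss2_const[OF r s] gauss2_linear[OF r s]
    gauss_ext_triv_val_var[OF r] gauss_ext_triv_val_const[OF r]
  show ?thesis
  proof (rule that[OF trop_valuation_gauss2[OF r s]])
    show "gauss2 r s [:[:c:]:] = 0" if "c \<noteq> 0" for c
      using that by (simp add: gauss2 triv_val_def)
    show "gauss2 r s (j1 [:0, 1:]) = r"
      by (simp add: gauss2 j1_var)
    show "gauss2 r s (j2 [:0, 1:]) = s"
      using gauss2(4)[of "0 :: complex"] by (simp add: gauss2 j2_var triv_val_def)
    show "gauss2 r s (Delta [:0, 1:]) = t"
      by (simp add: gauss2 Delta_var \<open>t = max r s\<close>)
  qed
next
  case True
  then have t': "t \<le> r" "t \<noteq> \<infinity>"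
    using t unfolding trop_add_def trop_def by auto
  note gauss2 = gauss2_const[OF r t'(2)] gauss2_linear[OF r t'(2)]
  define u where "u = gauss2 r t \<circ> (\<lambda>P. P \<circ>\<^sub>p [:- [:0, 1:], 1:])"
  have "trop_valuation u"
    unfolding u_def
    by (rule trop_valuation_comp[OF trop_valuation_gauss2[OF r t'(2)] pcompose_hom.comm_ring_hom_axioms])
  moreover have "u [:[:c:]:] = 0" if "c \<noteq> 0" for c
    using that by (simp add: gauss2 gauss_ext_triv_val_const[OF r] u_def triv_val_def)
  moreover have "u (j1 [:0, 1:]) = r"
    by (simp add: gauss2 gauss_ext_triv_val_var[OF r] u_def j1_var)
  moreover have "gauss_ext triv_val r (- [:0, 1 :: complex:]) = r"
    using trop_valuation.val_uminus[OF trop_valuation.trop_valuation_gauss_ext[OF trop_valuation_triv_val r]]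
      gauss_ext_triv_val_var[OF r] by metis
  then have "u (j2 [:0, 1:]) = s"
    using gauss2 t' True by (simp add: u_def j2_var pcompose_pCons max_def)
  moreover have "u (Delta [:0, 1:]) = t"
    using gauss_ext_triv_val_const[OF r, of "0 :: complex"]
    by (simp add: gauss2 u_def Delta_var pcompose_pCons triv_val_def)
  ultimately show ?thesis
    using that by blast
qed

lemma berk_op_var_image:
  assumes g: "g \<in> Hset" and h: "h \<in> Hset"
  shows "(\<lambda>f. f [:0, 1:]) ` berk_op g h = trop_add (g [:0, 1:]) (h [:0, 1:])"
proof
  show "(\<lambda>f. f [:0, 1:]) ` berk_op g h \<subseteq> trop_add (g [:0, 1:]) (h [:0, 1:])"
    using berk_op_var_in_trop_add by blast
  show "trop_add (g [:0, 1:]) (h [:0, 1:]) \<subseteq> (\<lambda>f. f [:0, 1:]) ` berk_op g h"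
  proof
    fix t assume t: "t \<in> trop_add (g [:0, 1:]) (h [:0, 1:])"
    have "g [:0, 1:] \<noteq> \<infinity>" "h [:0, 1:] \<noteq> \<infinity>"
      using g h unfolding Hset_def by auto
    then obtain u where u: "trop_valuation u" "\<And>c. c \<noteq> 0 \<Longrightarrow> u [:[:c:]:] = 0"
      "u (j1 [:0, 1:]) = g [:0, 1:]" "u (j2 [:0, 1:]) = h [:0, 1:]" "u (Delta [:0, 1:]) = t"
      using trop_add_realised_by_valuation t by metis
    then have "restrict (u \<circ> Delta) polyA \<in> berk_op g h"
      by (intro berk_op_realise[OF g h]) auto
    moreover have "restrict (u \<circ> Delta) polyA [:0, 1:] = t"
      using u(5) polyA_var by simp
    ultimately show "t \<in> (\<lambda>f. f [:0, 1:]) ` berk_op g h"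
      by (metis image_eqI)
  qed
qed

section \<open>The hypergroup \<open>\<bbbT>\<^sub><\<^sub>0\<close>\<close>

lemma trop_add_commute: "trop_add a b = trop_add b a"
  unfolding trop_add_def by (auto simp: max.commute)

definition trop_add3 :: "ereal \<Rightarrow> ereal \<Rightarrow> ereal \<Rightarrow> ereal set" where
  "trop_add3 x y z = {u. u \<noteq> \<infinity> \<and> u \<le> max x (max y z) \<and>
     (u = max x (max y z) \<or> (x = max x (max y z) \<and> y = max x (max y z)) \<or>
      (x = max x (max y z) \<and> z = max x (max y z)) \<or> (y = max x (max y z) \<and> z = max x (max y z)))}"

lemma trop_add3_rotate: "trop_add3 y z x = trop_add3 x y z"
  unfolding trop_add3_def by (auto simp: max.commute max.left_commute)

lemma trop_add_trop_add_eq_trop_add3: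
  assumes "x \<noteq> \<infinity>" "y \<noteq> \<infinity>" "z \<noteq> \<infinity>"
  shows "(\<Union>w\<in>trop_add x y. trop_add w z) = trop_add3 x y z"
proof
  show "(\<Union>w\<in>trop_add x y. trop_add w z) \<subseteq> trop_add3 x y z"
    using assms unfolding trop_add3_def trop_add_def trop_def by (auto simp: max_def split: if_splits)
  show "trop_add3 x y z \<subseteq> (\<Union>w\<in>trop_add x y. trop_add w z)"
  proof
    fix u assume u: "u \<in> trop_add3 x y z"
    consider "x \<noteq> y" | "x = y" "x < z" | "x = y" "z \<le> x" "u \<le> z" | "x = y" "z \<le> x" "z < u"
      by fastforce
    then show "u \<in> (\<Union>w\<in>trop_add x y. trop_add w z)"
    proof cases
      case 1
      then show ?thesis
        using assms u unfolding trop_add3_def trop_add_def trop_def by (auto simp: max_def split: if_splits)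
    next
      case 2
      then show ?thesis
        using assms u unfolding trop_add3_def trop_add_def trop_def by (intro UN_I[of x]) (auto simp: max_def)
    next
      case 3
      then show ?thesis
        using assms u unfolding trop_add3_def trop_add_def trop_def by (intro UN_I[of z]) (auto simp: max_def)
    next
      case 4
      then show ?thesis
        using assms u unfolding trop_add3_def trop_add_def trop_def by (intro UN_I[of u]) (auto simp: max_def)
    qed
  qed
qed

lemma trop_add_assoc:
  assumes "x \<noteq> \<infinity>" "y \<noteq> \<infinity>" "z \<noteq> \<infinity>"
  shows "(\<Union>w\<in>trop_add x y. trop_add w z) = (\<Union>w\<in>trop_add y z. trop_add x w)"
proof -
  have "(\<Union>w\<in>trop_add y z. trop_add x w) = (\<Union>w\<in>trop_add y z. trop_add w x)"
    by (simp add: trop_add_commute)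
  also have "\<dots> = trop_add3 x y z"
    using assms trop_add_trop_add_eq_trop_add3[of y z x] trop_add3_rotate by simp
  finally show ?thesis
    using assms trop_add_trop_add_eq_trop_add3 by simp
qed

lemma hyp_identity_trop_neg_iff: "hyp_identity trop_neg trop_add e \<longleftrightarrow> e = -\<infinity>"
proof
  assume "hyp_identity trop_neg trop_add e"
  then have "trop_add e e = {e}"
    unfolding hyp_identity_def by auto
  moreover have "-\<infinity> \<in> trop_add e e"
    unfolding trop_add_def trop_def by auto
  ultimately show "e = -\<infinity>"
    by auto
qed (auto simp: hyp_identity_def trop_neg_def trop_add_def trop_def)

lemma MInf_in_trop_add_iff: "x \<in> trop_neg \<Longrightarrow> -\<infinity> \<in> trop_add x x' \<longleftrightarrow> x' = x"
  unfolding trop_add_def trop_def trop_neg_def by (auto simp: max_def split: if_splits)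

lemma trop_add_reversible:
  assumes "y \<noteq> \<infinity>" "z \<noteq> \<infinity>" "x \<in> trop_add y z"
  shows "y \<in> trop_add x z"
  using assms unfolding trop_add_def trop_def by (auto simp: max_def split: if_splits)

lemma hypergroup_trop_neg: "hypergroup trop_neg trop_add"
  unfolding hypergroup_def
proof (intro conjI ballI allI impI)
  fix x y assume "x \<in> trop_neg" "y \<in> trop_neg"
  then show "trop_add x y \<subseteq> trop_neg"
    using trop_add_neg unfolding trop_neg_def by blast
next
  fix x y z assume "x \<in> trop_neg" "y \<in> trop_neg" "z \<in> trop_neg"
  then show "(\<Union>w\<in>trop_add x y. trop_add w z) = (\<Union>w\<in>trop_add y z. trop_add x w)"
    unfolding trop_neg_def by (intro trop_add_assoc) auto
next
  show "\<exists>!e. hyp_identity trop_neg trop_add e"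
    using hyp_identity_trop_neg_iff by auto
next
  fix e x assume "hyp_identity trop_neg trop_add e" "x \<in> trop_neg"
  then show "\<exists>!x'. x' \<in> trop_neg \<and> e \<in> trop_add x x' \<and> e \<in> trop_add x' x"
    using hyp_identity_trop_neg_iff MInf_in_trop_add_iff[of x] trop_add_commute by auto
next
  fix e x y z y' z'
  assume "hyp_identity trop_neg trop_add e"
    and xyz: "x \<in> trop_neg" "y \<in> trop_neg" "z \<in> trop_neg"
    and "e \<in> trop_add y y' \<and> e \<in> trop_add y' y \<and> e \<in> trop_add z z' \<and> e \<in> trop_add z' z"
    and x: "x \<in> trop_add y z"
  then have "y' = y" "z' = z"
    using hyp_identity_trop_neg_iff MInf_in_trop_add_iff by auto
  moreover have "y \<noteq> \<infinity>" "z \<noteq> \<infinity>"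
    using xyz unfolding trop_neg_def by auto
  ultimately show "y \<in> trop_add x z'" "z \<in> trop_add y' x"
    using trop_add_reversible x trop_add_commute by metis+
qed

section \<open>Pulling back a hypergroup structure along an isomorphism\<close>

lemma hypergroupD:
  assumes "hypergroup S op"
  shows hypergroup_assoc:
      "\<lbrakk>x \<in> S; y \<in> S; z \<in> S\<rbrakk> \<Longrightarrow> (\<Union>w\<in>op x y. op w z) = (\<Union>w\<in>op y z. op x w)"
    and hypergroup_ex1_identity: "\<exists>!e. hyp_identity S op e"
    and hypergroup_ex1_inverse:
      "\<lbrakk>hyp_identity S op e; x \<in> S\<rbrakk> \<Longrightarrow> \<exists>!x'. x' \<in> S \<and> e \<in> op x x' \<and> e \<in> op x' x"
    and hypergroup_reversible:
      "\<lbrakk>hyp_identity S op e; x \<in> S; y \<in> S; z \<in> S; y' \<in> S; z' \<in> S;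
        e \<in> op y y'; e \<in> op y' y; e \<in> op z z'; e \<in> op z' z; x \<in> op y z\<rbrakk>
       \<Longrightarrow> y \<in> op x z' \<and> z \<in> op y' x"
proof -
  note H = assms[unfolded hypergroup_def]
  show "(\<Union>w\<in>op x y. op w z) = (\<Union>w\<in>op y z. op x w)" if "x \<in> S" "y \<in> S" "z \<in> S"
    using H[THEN conjunct2, THEN conjunct1] that by blast
  show "\<exists>!e. hyp_identity S op e"
    by (rule H[THEN conjunct2, THEN conjunct2, THEN conjunct1])
  have inv_rev: "(\<forall>x\<in>S. \<exists>!x'. x' \<in> S \<and> e \<in> op x x' \<and> e \<in> op x' x) \<and>
    (\<forall>x\<in>S. \<forall>y\<in>S. \<forall>z\<in>S. \<forall>y'\<in>S. \<forall>z'\<in>S.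
        e \<in> op y y' \<and> e \<in> op y' y \<and> e \<in> op z z' \<and> e \<in> op z' z \<longrightarrow>
        x \<in> op y z \<longrightarrow> y \<in> op x z' \<and> z \<in> op y' x)" if "hyp_identity S op e"
    by (rule H[THEN conjunct2, THEN conjunct2, THEN conjunct2, THEN spec, THEN mp, OF that])
  show "\<exists>!x'. x' \<in> S \<and> e \<in> op x x' \<and> e \<in> op x' x" if "hyp_identity S op e" "x \<in> S"
    using inv_rev[OF that(1)] that(2) by blast
  show "y \<in> op x z' \<and> z \<in> op y' x"
    if "hyp_identity S op e" "x \<in> S" "y \<in> S" "z \<in> S" "y' \<in> S" "z' \<in> S"
      "e \<in> op y y'" "e \<in> op y' y" "e \<in> op z z'" "e \<in> op z' z" "x \<in> op y z"
    using inv_rev[OF that(1)] that(2-) by blast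
qed

context
  fixes S :: "'a set" and op :: "'a \<Rightarrow> 'a \<Rightarrow> 'a set"
    and S' :: "'b set" and op' :: "'b \<Rightarrow> 'b \<Rightarrow> 'b set" and \<phi> :: "'a \<Rightarrow> 'b"
  assumes hg: "hypergroup S' op'" and iso: "hypergroup_iso S op S' op' \<phi>"
    and closed: "\<And>x y. x \<in> S \<Longrightarrow> y \<in> S \<Longrightarrow> op x y \<subseteq> S"
begin

lemma iso_inj: "inj_on \<phi> S" and iso_image: "\<phi> ` S = S'"
  and iso_hom: "x \<in> S \<Longrightarrow> y \<in> S \<Longrightarrow> \<phi> ` op x y = op' (\<phi> x) (\<phi> y)"
  using iso unfolding hypergroup_iso_def bij_betw_def by auto

lemma iso_mem_iff:
  assumes "x \<in> S" "y \<in> S" "w \<in> S"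
  shows "w \<in> op x y \<longleftrightarrow> \<phi> w \<in> op' (\<phi> x) (\<phi> y)"
proof
  assume "\<phi> w \<in> op' (\<phi> x) (\<phi> y)"
  then obtain w' where "w' \<in> op x y" "\<phi> w' = \<phi> w"
    using iso_hom[OF assms(1,2)] by (metis imageE)
  moreover have "w' \<in> S"
    using closed[OF assms(1,2)] \<open>w' \<in> op x y\<close> by blast
  ultimately show "w \<in> op x y"
    using iso_inj assms(3) by (metis inj_onD)
qed (use iso_hom[OF assms(1,2)] in blast)

lemma iso_singleton_iff:
  assumes "A \<subseteq> S" "x \<in> S"
  shows "\<phi> ` A = {\<phi> x} \<longleftrightarrow> A = {x}"
  using inj_on_image_eq_iff[OF iso_inj, of A "{x}"] assms by simp

lemma iso_hyp_identity_iff: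
  assumes e: "e \<in> S"
  shows "hyp_identity S op e \<longleftrightarrow> hyp_identity S' op' (\<phi> e)"
proof -
  have "op e x = {x} \<and> op x e = {x} \<longleftrightarrow> op' (\<phi> e) (\<phi> x) = {\<phi> x} \<and> op' (\<phi> x) (\<phi> e) = {\<phi> x}"
    if "x \<in> S" for x
    using iso_singleton_iff[OF closed[OF e that] that] iso_singleton_iff[OF closed[OF that e] that]
      iso_hom[OF e that] iso_hom[OF that e] by simp
  then have "(\<forall>x\<in>S. op e x = {x} \<and> op x e = {x}) \<longleftrightarrow>
      (\<forall>x'\<in>\<phi> ` S. op' (\<phi> e) x' = {x'} \<and> op' x' (\<phi> e) = {x'})"
    by simp
  moreover have "\<phi> e \<in> S'"
    using e iso_image by blast
  ultimately show ?thesis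
    unfolding hyp_identity_def iso_image[symmetric] using e by (simp only: simp_thms)
qed

lemma iso_hyp_identityD:
  assumes "hyp_identity S op e"
  shows "e \<in> S" "hyp_identity S' op' (\<phi> e)"
proof -
  show "e \<in> S"
    using assms unfolding hyp_identity_def by (rule conjunct1)
  then show "hyp_identity S' op' (\<phi> e)"
    using assms iso_hyp_identity_iff by (simp only:)
qed

lemma iso_image_UN:
  assumes "A \<subseteq> S" "z \<in> S"
  shows "\<phi> ` (\<Union>w\<in>A. op w z) = (\<Union>w'\<in>\<phi> ` A. op' w' (\<phi> z))"
    and "\<phi> ` (\<Union>w\<in>A. op z w) = (\<Union>w'\<in>\<phi> ` A. op' (\<phi> z) w')"
  using assms iso_hom by (auto simp: image_UN subset_iff)

lemma iso_assoc:
  assumes xyz: "x \<in> S" "y \<in> S" "z \<in> S"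
  shows "(\<Union>w\<in>op x y. op w z) = (\<Union>w\<in>op y z. op x w)"
proof -
  have "\<phi> ` (\<Union>w\<in>op x y. op w z) = (\<Union>w'\<in>op' (\<phi> x) (\<phi> y). op' w' (\<phi> z))"
    using iso_image_UN(1)[OF closed xyz(3)] iso_hom xyz by simp
  also have "\<dots> = (\<Union>w'\<in>op' (\<phi> y) (\<phi> z). op' (\<phi> x) w')"
    using xyz iso_image hypergroup_assoc[OF hg] by blast
  also have "\<dots> = \<phi> ` (\<Union>w\<in>op y z. op x w)"
    using iso_image_UN(2)[OF closed xyz(1)] iso_hom xyz by simp
  finally have "\<phi> ` (\<Union>w\<in>op x y. op w z) = \<phi> ` (\<Union>w\<in>op y z. op x w)" .
  moreover have "(\<Union>w\<in>op x y. op w z) \<subseteq> S" "(\<Union>w\<in>op y z. op x w) \<subseteq> S"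
    using closed xyz by (meson UN_least subsetD)+
  ultimately show ?thesis
    by (metis inj_on_image_eq_iff[OF iso_inj])
qed

lemma iso_ex1_identity: "\<exists>!e. hyp_identity S op e"
proof -
  obtain e' where e': "hyp_identity S' op' e'"
    using hypergroup_ex1_identity[OF hg] by blast
  then obtain e where e: "e \<in> S" "\<phi> e = e'"
    using iso_image unfolding hyp_identity_def by blast
  show ?thesis
  proof
    show "hyp_identity S op e"
      using iso_hyp_identity_iff e e' by simp
    fix e2 assume "hyp_identity S op e2"
    then have "e2 \<in> S" "\<phi> e2 = e'"
      using iso_hyp_identityD e' hypergroup_ex1_identity[OF hg] by blast+
    then show "e2 = e"
      using e iso_inj by (metis inj_onD)
  qed
qed

lemma iso_ex1_inverse:
  assumes he: "hyp_identity S op e" and x: "x \<in> S"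
  shows "\<exists>!x'. x' \<in> S \<and> e \<in> op x x' \<and> e \<in> op x' x"
proof -
  note e = iso_hyp_identityD[OF he]
  have char: "e \<in> op x y \<and> e \<in> op y x \<longleftrightarrow> \<phi> e \<in> op' (\<phi> x) (\<phi> y) \<and> \<phi> e \<in> op' (\<phi> y) (\<phi> x)"
    if "y \<in> S" for y
    using iso_mem_iff e(1) x that by blast
  obtain y' where y': "y' \<in> S'" "\<phi> e \<in> op' (\<phi> x) y'" "\<phi> e \<in> op' y' (\<phi> x)"
    and uniq: "\<And>z'. z' \<in> S' \<Longrightarrow> \<phi> e \<in> op' (\<phi> x) z' \<Longrightarrow> \<phi> e \<in> op' z' (\<phi> x) \<Longrightarrow> z' = y'"
    using hypergroup_ex1_inverse[OF hg e(2)] x iso_image by blast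
  then obtain y where y: "y \<in> S" "\<phi> y = y'"
    using iso_image by blast
  show ?thesis
  proof
    show "y \<in> S \<and> e \<in> op x y \<and> e \<in> op y x"
      using char y y' by blast
    fix z assume z: "z \<in> S \<and> e \<in> op x z \<and> e \<in> op z x"
    then have "\<phi> z = \<phi> y"
      using char uniq iso_image y by blast
    then show "z = y"
      using z y iso_inj by (metis inj_onD)
  qed
qed

lemma iso_reversible:
  assumes he: "hyp_identity S op e"
    and xyz: "x \<in> S" "y \<in> S" "z \<in> S" "y' \<in> S" "z' \<in> S"
    and inv: "e \<in> op y y'" "e \<in> op y' y" "e \<in> op z z'" "e \<in> op z' z" and x: "x \<in> op y z"
  shows "y \<in> op x z' \<and> z \<in> op y' x"
proof -
  note e = iso_hyp_identityD[OF he]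
  have "\<phi> y \<in> op' (\<phi> x) (\<phi> z') \<and> \<phi> z \<in> op' (\<phi> y') (\<phi> x)"
  proof (rule hypergroup_reversible[OF hg e(2)])
    show "\<phi> x \<in> S'" "\<phi> y \<in> S'" "\<phi> z \<in> S'" "\<phi> y' \<in> S'" "\<phi> z' \<in> S'"
      using xyz iso_image by blast+
    show "\<phi> e \<in> op' (\<phi> y) (\<phi> y')" "\<phi> e \<in> op' (\<phi> y') (\<phi> y)"
      "\<phi> e \<in> op' (\<phi> z) (\<phi> z')" "\<phi> e \<in> op' (\<phi> z') (\<phi> z)" "\<phi> x \<in> op' (\<phi> y) (\<phi> z)"
      using inv x iso_mem_iff xyz e(1) by blast+
  qed
  then show ?thesis
    using iso_mem_iff xyz by blast
qed

lemma hypergroup_iso_source: "hypergroup S op"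
  unfolding hypergroup_def
proof (intro conjI ballI allI impI)
  fix e x y z y' z'
  assume "hyp_identity S op e" "x \<in> S" "y \<in> S" "z \<in> S" "y' \<in> S" "z' \<in> S"
    "e \<in> op y y' \<and> e \<in> op y' y \<and> e \<in> op z z' \<and> e \<in> op z' z" "x \<in> op y z"
  then show "y \<in> op x z'" "z \<in> op y' x"
    using iso_reversible by blast+
qed (simp_all add: closed iso_assoc iso_ex1_identity iso_ex1_inverse)

end

theorem proposition5p28:
  shows "(\<forall>f\<in>Hset. \<forall>g\<in>Hset. berk_op f g \<subseteq> Hset)
       \<and> hypergroup Hset berk_op
       \<and> hypergroup_iso Hset berk_op trop_neg trop_add (\<lambda>h. h [:0, 1:])"
proof (intro conjI)
  show closed: "\<forall>f\<in>Hset. \<forall>g\<in>Hset. berk_op f g \<subseteq> Hset"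
    using berk_op_Hset_closed by blast
  show iso: "hypergroup_iso Hset berk_op trop_neg trop_add (\<lambda>h. h [:0, 1:])"
    unfolding hypergroup_iso_def using bij_betw_Hset_trop_neg berk_op_var_image by blast
  show "hypergroup Hset berk_op"
    by (rule hypergroup_iso_source[OF hypergroup_trop_neg iso]) (use closed in blast)
qed

end
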